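(* For all positive integers $m,n,p,q$, $$\theta(K_{m,n}\times K_{p,q})=\max\{\theta(K_{mp,nq}),\ \theta(K_{mq,np})\}.$$
   Context: The thickness $\theta(G)$ of a graph $G$ is the minimum number of planar subgraphs whose union is $G$. The Kronecker product $G\times H$ of graphs $G$ and $H$ is the graph with vertex set $V(G)\times V(H)$ in which $(g,h)$ and $(g',h')$ are adjacent if and only if $gg'\in E(G)$ and $hh'\in E(H)$. $K_{a,b}$ denotes the complete bipartite graph with parts of sizes $a$ and $b$. *)

theory Defs
  imports "HOL-Analysis.Analysis"
begin

text \<open>A finite simple graph is a pair (V, E) of a vertex set and a set of
  two-element vertex sets (edges).\<close>

type_synonym 'a graph = "'a set \<times> 'a set set"

definition planar :: "'a set \<Rightarrow> 'a set set \<Rightarrow> bool" where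
  "planar V E \<longleftrightarrow>
     (\<exists>(f :: 'a \<Rightarrow> complex) (g :: 'a set \<Rightarrow> real \<Rightarrow> complex).
        inj_on f V \<and>
        (\<forall>e\<in>E. arc (g e) \<and> {pathstart (g e), pathfinish (g e)} = f ` e \<and>
                  path_image (g e) \<inter> f ` V = f ` e) \<and>
        (\<forall>e\<in>E. \<forall>e'\<in>E. e \<noteq> e' \<longrightarrow> path_image (g e) \<inter> path_image (g e') \<subseteq> f ` (e \<inter> e')))"

definition thickness :: "'a graph \<Rightarrow> nat" where
  "thickness G = (LEAST k. \<exists>Es :: nat \<Rightarrow> 'a set set.
      (\<Union>i<k. Es i) = snd G \<and> (\<forall>i<k. Es i \<subseteq> snd G \<and> planar (fst G) (Es i)))"

definition Kbip :: "nat \<Rightarrow> nat \<Rightarrow> (bool \<times> nat) graph" where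
  "Kbip a b = ({(False, i) | i. i < a} \<union> {(True, j) | j. j < b},
               {{(False, i), (True, j)} | i j. i < a \<and> j < b})"

definition kron :: "'a graph \<Rightarrow> 'b graph \<Rightarrow> ('a \<times> 'b) graph" where
  "kron G H = (fst G \<times> fst H,
               {{(g, h), (g', h')} | g g' h h'. {g, g'} \<in> snd G \<and> {h, h'} \<in> snd H})"

end

theory Submission
  imports Defs
begin

text \<open>An edge of \<open>K\<^sub>m\<^sub>,\<^sub>n \<times> K\<^sub>p\<^sub>,\<^sub>q\<close> joins \<open>(a, c)\<close> to \<open>(b, d)\<close> with \<open>a, b\<close> on opposite
  sides of \<open>K\<^sub>m\<^sub>,\<^sub>n\<close> and \<open>c, d\<close> on opposite sides of \<open>K\<^sub>p\<^sub>,\<^sub>q\<close>. The vertices whose two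
  coordinates lie on the same side span a copy of \<open>K\<^sub>m\<^sub>p\<^sub>,\<^sub>n\<^sub>q\<close>, the others a copy of
  \<open>K\<^sub>m\<^sub>q\<^sub>,\<^sub>n\<^sub>p\<close>, and every edge lies in one of the two. So the product is a disjoint union
  of these two graphs. Thickness is invariant under isomorphism, and the thickness of a
  disjoint union is the maximum of the two thicknesses: planar layers of the two parts can be
  drawn side by side, after translating the drawing of one part far away from the other.\<close>

section \<open>Plane drawings\<close>

definition plane_drawing ::
    "'a set \<Rightarrow> 'a set set \<Rightarrow> ('a \<Rightarrow> complex) \<Rightarrow> ('a set \<Rightarrow> real \<Rightarrow> complex) \<Rightarrow> bool" where
  "plane_drawing V E f g \<longleftrightarrow>
     inj_on f V \<and>
     (\<forall>e\<in>E. arc (g e) \<and> {pathstart (g e), pathfinish (g e)} = f ` e \<and>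
               path_image (g e) \<inter> f ` V = f ` e) \<and>
     (\<forall>e\<in>E. \<forall>e'\<in>E. e \<noteq> e' \<longrightarrow> path_image (g e) \<inter> path_image (g e') \<subseteq> f ` (e \<inter> e'))"

lemma planar_iff_plane_drawing: "planar V E \<longleftrightarrow> (\<exists>f g. plane_drawing V E f g)"
  unfolding planar_def plane_drawing_def by blast

lemma plane_drawingI:
  assumes "inj_on f V"
    and "\<And>e. e \<in> E \<Longrightarrow> arc (g e)"
    and "\<And>e. e \<in> E \<Longrightarrow> {pathstart (g e), pathfinish (g e)} = f ` e"
    and "\<And>e. e \<in> E \<Longrightarrow> path_image (g e) \<inter> f ` V = f ` e"
    and "\<And>e e'. e \<in> E \<Longrightarrow> e' \<in> E \<Longrightarrow> e \<noteq> e' \<Longrightarrow>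
           path_image (g e) \<inter> path_image (g e') \<subseteq> f ` (e \<inter> e')"
  shows "plane_drawing V E f g"
  using assms unfolding plane_drawing_def by simp

lemma
  assumes "plane_drawing V E f g"
  shows plane_drawing_inj: "inj_on f V"
    and plane_drawing_arc: "e \<in> E \<Longrightarrow> arc (g e)"
    and plane_drawing_ends: "e \<in> E \<Longrightarrow> {pathstart (g e), pathfinish (g e)} = f ` e"
    and plane_drawing_vertices: "e \<in> E \<Longrightarrow> path_image (g e) \<inter> f ` V = f ` e"
    and plane_drawing_crossing: "e \<in> E \<Longrightarrow> e' \<in> E \<Longrightarrow> e \<noteq> e' \<Longrightarrow>
           path_image (g e) \<inter> path_image (g e') \<subseteq> f ` (e \<inter> e')"
  using assms unfolding plane_drawing_def by simp_all

lemma plane_drawing_edge_nonempty: "plane_drawing V E f g \<Longrightarrow> e \<in> E \<Longrightarrow> e \<noteq> {}"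
  using plane_drawing_ends by fastforce

lemma plane_drawing_subgraph:
  assumes "plane_drawing V E f g" "V' \<subseteq> V" "E' \<subseteq> E" "\<And>e. e \<in> E' \<Longrightarrow> e \<subseteq> V'"
  shows "plane_drawing V' E' f g"
proof (rule plane_drawingI)
  show "inj_on f V'" using assms(1,2) plane_drawing_inj inj_on_subset by blast
  fix e assume e: "e \<in> E'"
  with assms(3) have "e \<in> E" by blast
  with assms(1) show "arc (g e)" "{pathstart (g e), pathfinish (g e)} = f ` e"
    by (simp_all add: plane_drawing_arc plane_drawing_ends)
  have "path_image (g e) \<inter> f ` V = f ` e" using assms(1) \<open>e \<in> E\<close> by (rule plane_drawing_vertices)
  then show "path_image (g e) \<inter> f ` V' = f ` e" using assms(2) assms(4)[OF e] by blast
  fix e' assume "e' \<in> E'" "e \<noteq> e'"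
  then show "path_image (g e) \<inter> path_image (g e') \<subseteq> f ` (e \<inter> e')"
    using assms(1,3) \<open>e \<in> E\<close> plane_drawing_crossing by blast
qed

lemma planar_subgraph:
  "planar V E \<Longrightarrow> V' \<subseteq> V \<Longrightarrow> E' \<subseteq> E \<Longrightarrow> (\<And>e. e \<in> E' \<Longrightarrow> e \<subseteq> V') \<Longrightarrow> planar V' E'"
  unfolding planar_iff_plane_drawing using plane_drawing_subgraph by metis

lemma plane_drawing_vimage:
  assumes "plane_drawing (\<psi> ` V) ((`) \<psi> ` E) f g" "inj_on \<psi> V" "\<And>e. e \<in> E \<Longrightarrow> e \<subseteq> V"
  shows "plane_drawing V E (f \<circ> \<psi>) (\<lambda>e. g (\<psi> ` e))"
proof (rule plane_drawingI)
  show "inj_on (f \<circ> \<psi>) V" using assms(1,2) plane_drawing_inj comp_inj_on by blast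
  fix e assume e: "e \<in> E"
  then have "\<psi> ` e \<in> (`) \<psi> ` E" by blast
  from plane_drawing_arc[OF assms(1) this] plane_drawing_ends[OF assms(1) this]
    plane_drawing_vertices[OF assms(1) this]
  show "arc (g (\<psi> ` e))" "{pathstart (g (\<psi> ` e)), pathfinish (g (\<psi> ` e))} = (f \<circ> \<psi>) ` e"
    "path_image (g (\<psi> ` e)) \<inter> (f \<circ> \<psi>) ` V = (f \<circ> \<psi>) ` e"
    by (simp_all add: image_comp)
  fix e' assume e': "e' \<in> E" "e \<noteq> e'"
  have "\<psi> ` e \<noteq> \<psi> ` e'" and image_Int: "\<psi> ` (e \<inter> e') = \<psi> ` e \<inter> \<psi> ` e'"
    using e e' assms(2,3) by (simp_all add: inj_on_image_eq_iff inj_on_image_Int)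
  then have "path_image (g (\<psi> ` e)) \<inter> path_image (g (\<psi> ` e')) \<subseteq> f ` (\<psi> ` e \<inter> \<psi> ` e')"
    using plane_drawing_crossing[OF assms(1), of "\<psi> ` e" "\<psi> ` e'"] e e' by blast
  also have "\<dots> = (f \<circ> \<psi>) ` (e \<inter> e')"
    by (simp only: image_comp[symmetric] image_Int)
  finally show "path_image (g (\<psi> ` e)) \<inter> path_image (g (\<psi> ` e')) \<subseteq> (f \<circ> \<psi>) ` (e \<inter> e')" .
qed

lemma inv_into_graph_image:
  assumes "inj_on \<psi> V" "\<And>e. e \<in> E \<Longrightarrow> e \<subseteq> V"
  shows "inj_on (inv_into V \<psi>) (\<psi> ` V)" "inv_into V \<psi> ` \<psi> ` V = V"
    "(`) (inv_into V \<psi>) ` (`) \<psi> ` E = E" "\<And>e. e \<in> (`) \<psi> ` E \<Longrightarrow> e \<subseteq> \<psi> ` V"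
proof -
  have "inv_into V \<psi> ` \<psi> ` e = e" if "e \<subseteq> V" for e
    using that assms(1) by (simp add: inv_into_image_cancel)
  then show "inv_into V \<psi> ` \<psi> ` V = V" "(`) (inv_into V \<psi>) ` (`) \<psi> ` E = E"
    using assms(2) by (force simp: image_comp)+
  show "inj_on (inv_into V \<psi>) (\<psi> ` V)" by (rule inj_on_inv_into) simp
  show "\<And>e. e \<in> (`) \<psi> ` E \<Longrightarrow> e \<subseteq> \<psi> ` V" using assms(2) by blast
qed

lemma planar_vimage:
  assumes "planar (\<psi> ` V) ((`) \<psi> ` E)" "inj_on \<psi> V" "\<And>e. e \<in> E \<Longrightarrow> e \<subseteq> V"
  shows "planar V E"
  using assms(1) plane_drawing_vimage[OF _ assms(2,3)] unfolding planar_iff_plane_drawing by blast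

lemma planar_image_iff:
  assumes "inj_on \<psi> V" "\<And>e. e \<in> E \<Longrightarrow> e \<subseteq> V"
  shows "planar (\<psi> ` V) ((`) \<psi> ` E) \<longleftrightarrow> planar V E"
proof
  show "planar (\<psi> ` V) ((`) \<psi> ` E) \<Longrightarrow> planar V E" using planar_vimage assms by metis
  note inv = inv_into_graph_image[OF assms]
  assume "planar V E"
  then have "planar (inv_into V \<psi> ` \<psi> ` V) ((`) (inv_into V \<psi>) ` (`) \<psi> ` E)"
    by (simp only: inv(2,3))
  then show "planar (\<psi> ` V) ((`) \<psi> ` E)" using inv(1,4) by (rule planar_vimage)
qed

definition parabola :: "real \<Rightarrow> complex" where
  "parabola t = Complex t (t\<^sup>2)"

lemma inj_parabola: "inj parabola"
  by (rule injI) (simp add: parabola_def complex_eq_iff)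

lemma closed_segment_parabola:
  "closed_segment (parabola s) (parabola t) \<inter> range parabola = {parabola s, parabola t}"
proof
  show "closed_segment (parabola s) (parabola t) \<inter> range parabola \<subseteq> {parabola s, parabola t}"
  proof
    fix z assume z: "z \<in> closed_segment (parabola s) (parabola t) \<inter> range parabola"
    then obtain r where r: "z = parabola r" by blast
    from z have "z \<in> closed_segment (parabola s) (parabola t)" by blast
    then obtain u where "0 \<le> u" "u \<le> 1" and z_eq: "z = (1 - u) *\<^sub>R parabola s + u *\<^sub>R parabola t"
      unfolding closed_segment_def by blast
    have Re: "r = (1 - u) * s + u * t" using arg_cong[OF z_eq, of Re] r by (simp add: parabola_def)
    have "((1 - u) * s + u * t)\<^sup>2 = (1 - u) * s\<^sup>2 + u * t\<^sup>2"
      using arg_cong[OF z_eq, of Im] r Re by (simp add: parabola_def)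
    moreover have "u * (1 - u) * (s - t)\<^sup>2 = (1 - u) * s\<^sup>2 + u * t\<^sup>2 - ((1 - u) * s + u * t)\<^sup>2"
      by (simp add: power2_eq_square algebra_simps)
    ultimately have "u = 0 \<or> u = 1 \<or> s = t" by simp
    with Re have "r = s \<or> r = t" by (auto simp: algebra_simps)
    then show "z \<in> {parabola s, parabola t}" using r by blast
  qed
  show "{parabola s, parabola t} \<subseteq> closed_segment (parabola s) (parabola t) \<inter> range parabola"
    by (simp add: ends_in_segment)
qed

lemma countable_plane_drawing:
  assumes "countable V"
  obtains f where "inj_on f V" "f ` V \<subseteq> range parabola"
proof -
  define f where "f v = parabola (real (to_nat_on V v))" for v
  have "inj_on f V"
  proof (rule inj_onI)
    fix v w assume "v \<in> V" "w \<in> V" "f v = f w"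
    then have "to_nat_on V v = to_nat_on V w" using inj_parabola by (simp add: f_def inj_eq)
    then show "v = w" using inj_on_to_nat_on[OF assms] \<open>v \<in> V\<close> \<open>w \<in> V\<close>
      by (simp add: inj_on_eq_iff)
  qed
  moreover have "f ` V \<subseteq> range parabola" unfolding f_def by blast
  ultimately show thesis by (rule that)
qed

lemma planar_edgeless:
  assumes "countable V"
  shows "planar V {}"
proof -
  obtain f where "inj_on f V" "f ` V \<subseteq> range parabola"
    by (rule countable_plane_drawing[OF assms])
  then have "plane_drawing V {} f (\<lambda>_. linepath 0 0)" by (intro plane_drawingI) simp_all
  then show ?thesis unfolding planar_iff_plane_drawing by blast
qed

lemma planar_single_edge:
  assumes "countable V" "x \<in> V" "y \<in> V" "x \<noteq> y"
  shows "planar V {{x, y}}"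
proof -
  obtain f where f: "inj_on f V" "f ` V \<subseteq> range parabola"
    by (rule countable_plane_drawing[OF assms(1)])
  have "f x \<noteq> f y" using f(1) assms(2-4) by (simp add: inj_on_eq_iff)
  moreover have "closed_segment (f x) (f y) \<inter> f ` V = {f x, f y}"
  proof (rule subset_antisym)
    obtain s t where st: "f x = parabola s" "f y = parabola t"
      using f(2) assms(2,3) by (metis image_subset_iff rangeE)
    have "closed_segment (f x) (f y) \<inter> f ` V \<subseteq> closed_segment (f x) (f y) \<inter> range parabola"
      using f(2) by (rule Int_mono[OF order_refl])
    also have "\<dots> = {f x, f y}" unfolding st by (rule closed_segment_parabola)
    finally show "closed_segment (f x) (f y) \<inter> f ` V \<subseteq> {f x, f y}" .
    show "{f x, f y} \<subseteq> closed_segment (f x) (f y) \<inter> f ` V"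
      using assms(2,3) by (simp add: ends_in_segment)
  qed
  ultimately have "plane_drawing V {{x, y}} f (\<lambda>e. linepath (f x) (f y))"
    by (intro plane_drawingI f(1)) (simp_all add: arc_linepath)
  then show ?thesis unfolding planar_iff_plane_drawing by blast
qed

definition drawing_set ::
    "'a set \<Rightarrow> 'a set set \<Rightarrow> ('a \<Rightarrow> complex) \<Rightarrow> ('a set \<Rightarrow> real \<Rightarrow> complex) \<Rightarrow> complex set" where
  "drawing_set V E f g = f ` V \<union> (\<Union>e\<in>E. path_image (g e))"

lemma bounded_drawing_set:
  assumes "plane_drawing V E f g" "finite V" "finite E"
  shows "bounded (drawing_set V E f g)"
  unfolding drawing_set_def
  using assms plane_drawing_arc[OF assms(1)] by (auto intro!: bounded_arc_image)

lemma plane_drawing_translate: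
  assumes "plane_drawing V E f g"
  shows "plane_drawing V E (\<lambda>v. c + f v) (\<lambda>e. (\<lambda>z. c + z) \<circ> g e)"
proof (rule plane_drawingI)
  have "inj ((+) c)" by simp
  then show "inj_on (\<lambda>v. c + f v) V"
    using plane_drawing_inj[OF assms] comp_inj_on[of f V "(+) c"] by (simp add: o_def inj_on_subset)
  fix e assume e: "e \<in> E"
  show "arc ((\<lambda>z. c + z) \<circ> g e)"
    using plane_drawing_arc[OF assms e] by (simp add: arc_translation_eq)
  show "{pathstart ((\<lambda>z. c + z) \<circ> g e), pathfinish ((\<lambda>z. c + z) \<circ> g e)} = (\<lambda>v. c + f v) ` e"
    using plane_drawing_ends[OF assms e, symmetric]
    by (simp add: pathstart_translation pathfinish_translation
        image_comp[symmetric, unfolded o_def])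
  show "path_image ((\<lambda>z. c + z) \<circ> g e) \<inter> (\<lambda>v. c + f v) ` V = (\<lambda>v. c + f v) ` e"
    using plane_drawing_vertices[OF assms e]
    by (simp add: path_image_translation image_comp[symmetric, unfolded o_def] image_Int[symmetric])
  fix e' assume "e' \<in> E" "e \<noteq> e'"
  then show "path_image ((\<lambda>z. c + z) \<circ> g e) \<inter> path_image ((\<lambda>z. c + z) \<circ> g e')
      \<subseteq> (\<lambda>v. c + f v) ` (e \<inter> e')"
    using plane_drawing_crossing[OF assms e]
    by (simp add: path_image_translation image_comp[symmetric, unfolded o_def] image_Int[symmetric]
        image_mono)
qed

lemma drawing_set_translate:
  "drawing_set V E (\<lambda>v. c + f v) (\<lambda>e. (\<lambda>z. c + z) \<circ> g e) = (\<lambda>z. c + z) ` drawing_set V E f g"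
  by (simp add: drawing_set_def path_image_translation image_Un image_UN image_image)

lemma plane_drawing_cong:
  assumes f: "\<And>v. v \<in> V \<Longrightarrow> f v = f' v" and g: "\<And>e. e \<in> E \<Longrightarrow> g e = g' e"
    and E: "\<And>e. e \<in> E \<Longrightarrow> e \<subseteq> V"
  shows "plane_drawing V E f g \<longleftrightarrow> plane_drawing V E f' g'"
proof -
  have "f ` A = f' ` A" if "A \<subseteq> V" for A
    by (rule image_cong[OF refl]) (use that f in blast)
  moreover have "e \<inter> e' \<subseteq> V" if "e \<in> E" for e e' using E[OF that] by blast
  moreover have "inj_on f V = inj_on f' V" by (rule inj_on_cong) (rule f)
  ultimately show ?thesis
    using E unfolding plane_drawing_def by (simp add: g cong: ball_cong)
qed

lemma plane_drawing_Un:
  assumes d1: "plane_drawing V1 E1 f g" and d2: "plane_drawing V2 E2 f g"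
    and disj: "drawing_set V1 E1 f g \<inter> drawing_set V2 E2 f g = {}"
  shows "plane_drawing (V1 \<union> V2) (E1 \<union> E2) f g"
proof (rule plane_drawingI)
  have P1: "path_image (g e) \<inter> f ` V2 = {}" if "e \<in> E1" for e
    using that disj unfolding drawing_set_def by blast
  have P2: "path_image (g e) \<inter> f ` V1 = {}" if "e \<in> E2" for e
    using that disj unfolding drawing_set_def by blast
  have "f ` V1 \<inter> f ` V2 = {}" using disj unfolding drawing_set_def by blast
  then show "inj_on f (V1 \<union> V2)"
    using plane_drawing_inj[OF d1] plane_drawing_inj[OF d2] by (auto simp: inj_on_Un)
  fix e assume "e \<in> E1 \<union> E2"
  then consider (one) "e \<in> E1" | (two) "e \<in> E2" by blast
  note parts = this
  from parts show "arc (g e)"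
    by cases (simp_all add: plane_drawing_arc[OF d1] plane_drawing_arc[OF d2])
  from parts show "{pathstart (g e), pathfinish (g e)} = f ` e"
    by cases (simp_all add: plane_drawing_ends[OF d1] plane_drawing_ends[OF d2])
  from parts show "path_image (g e) \<inter> f ` (V1 \<union> V2) = f ` e"
    by cases (simp_all add: image_Un Int_Un_distrib P1 P2
        plane_drawing_vertices[OF d1] plane_drawing_vertices[OF d2])
  fix e' assume "e' \<in> E1 \<union> E2" "e \<noteq> e'"
  then consider "e \<in> E1" "e' \<in> E1" | "e \<in> E2" "e' \<in> E2"
    | "e \<in> E1" "e' \<in> E2" | "e \<in> E2" "e' \<in> E1"
    using \<open>e \<in> E1 \<union> E2\<close> by blast
  then show "path_image (g e) \<inter> path_image (g e') \<subseteq> f ` (e \<inter> e')"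
  proof cases
    case 1
    then show ?thesis using plane_drawing_crossing[OF d1] \<open>e \<noteq> e'\<close> by blast
  next
    case 2
    then show ?thesis using plane_drawing_crossing[OF d2] \<open>e \<noteq> e'\<close> by blast
  qed (use disj in \<open>auto simp: drawing_set_def\<close>)
qed

lemma finite_edges_of_finite_vertices: "finite V \<Longrightarrow> (\<And>e. e \<in> E \<Longrightarrow> e \<subseteq> V) \<Longrightarrow> finite E"
  by (meson PowI finite_Pow_iff finite_subset subsetI)

lemma drawing_set_cong:
  assumes "\<And>v. v \<in> V \<Longrightarrow> f v = f' v" "\<And>e. e \<in> E \<Longrightarrow> g e = g' e"
  shows "drawing_set V E f g = drawing_set V E f' g'"
  unfolding drawing_set_def using assms by (simp cong: SUP_cong_simp)

lemma bounded_translate_disjoint: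
  fixes S T :: "'a :: real_normed_algebra_1 set"
  assumes "bounded S" "bounded T"
  obtains c where "S \<inter> (\<lambda>z. c + z) ` T = {}"
proof -
  have "bounded (S \<union> T)" using assms by simp
  then obtain B where B: "\<And>z. z \<in> S \<union> T \<Longrightarrow> norm z \<le> B" unfolding bounded_iff by blast
  define c :: 'a where "c = of_real (2 * \<bar>B\<bar> + 1)"
  have norm_c: "norm c = 2 * \<bar>B\<bar> + 1" unfolding c_def by (subst norm_of_real) simp
  have "z \<noteq> c + w" if "z \<in> S" "w \<in> T" for z w
  proof
    assume "z = c + w"
    then have "norm c \<le> norm z + norm w" by (metis add_diff_cancel_right' norm_triangle_ineq4)
    also have "\<dots> \<le> 2 * \<bar>B\<bar>" using B[of z] B[of w] that by force
    finally show False using norm_c by simp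
  qed
  then have "S \<inter> (\<lambda>z. c + z) ` T = {}" by blast
  then show thesis by (rule that)
qed

lemma planar_disjoint_Un:
  assumes "planar V1 E1" "planar V2 E2" "V1 \<inter> V2 = {}" "finite V1" "finite V2"
    and E1: "\<And>e. e \<in> E1 \<Longrightarrow> e \<subseteq> V1" and E2: "\<And>e. e \<in> E2 \<Longrightarrow> e \<subseteq> V2"
  shows "planar (V1 \<union> V2) (E1 \<union> E2)"
proof -
  obtain f1 g1 f2 g2 where d1: "plane_drawing V1 E1 f1 g1" and d2: "plane_drawing V2 E2 f2 g2"
    using assms(1,2) unfolding planar_iff_plane_drawing by blast
  let ?D1 = "drawing_set V1 E1 f1 g1" and ?D2 = "drawing_set V2 E2 f2 g2"
  have "finite E1" using E1 by (rule finite_edges_of_finite_vertices[OF assms(4)])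
  with d1 assms(4) have "bounded ?D1" by (rule bounded_drawing_set)
  have "finite E2" using E2 by (rule finite_edges_of_finite_vertices[OF assms(5)])
  with d2 assms(5) have "bounded ?D2" by (rule bounded_drawing_set)
  with \<open>bounded ?D1\<close> obtain c where disj: "?D1 \<inter> (\<lambda>z. c + z) ` ?D2 = {}"
    by (rule bounded_translate_disjoint)
  define f where "f v = (if v \<in> V1 then f1 v else c + f2 v)" for v
  define g where "g e = (if e \<in> E1 then g1 e else (\<lambda>z. c + z) \<circ> g2 e)" for e
  have f2: "f v = c + f2 v" if "v \<in> V2" for v using that assms(3) unfolding f_def by auto
  have g2: "g e = (\<lambda>z. c + z) \<circ> g2 e" if "e \<in> E2" for e
  proof -
    have "e \<noteq> {}" by (rule plane_drawing_edge_nonempty[OF d2 that])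
    then have "e \<notin> E1" using E1 E2[OF that] assms(3) by blast
    then show ?thesis unfolding g_def by simp
  qed
  have "plane_drawing V1 E1 f g" "drawing_set V1 E1 f g = ?D1"
    using plane_drawing_cong[of V1 f1 f E1 g1 g] drawing_set_cong[of V1 f1 f E1 g1 g] d1 E1
    unfolding f_def g_def by simp_all
  moreover have "plane_drawing V2 E2 f g" "drawing_set V2 E2 f g = (\<lambda>z. c + z) ` ?D2"
    using plane_drawing_translate[OF d2, of c] drawing_set_translate[of V2 E2 c f2 g2]
      plane_drawing_cong[of V2 f "\<lambda>v. c + f2 v" E2 g] drawing_set_cong[of V2 f "\<lambda>v. c + f2 v" E2 g]
      f2 g2 E2 by simp_all
  ultimately have "plane_drawing (V1 \<union> V2) (E1 \<union> E2) f g"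
    using disj by (intro plane_drawing_Un) simp_all
  then show ?thesis unfolding planar_iff_plane_drawing by blast
qed

section \<open>Planar covers and thickness\<close>

definition planar_cover :: "'a set \<Rightarrow> 'a set set \<Rightarrow> nat \<Rightarrow> bool" where
  "planar_cover V E k \<longleftrightarrow>
     (\<exists>Es :: nat \<Rightarrow> 'a set set. (\<Union>i<k. Es i) = E \<and> (\<forall>i<k. Es i \<subseteq> E \<and> planar V (Es i)))"

lemma thickness_eq_Least_planar_cover: "thickness (V, E) = (LEAST k. planar_cover V E k)"
  unfolding thickness_def planar_cover_def by simp

lemma planar_cover_mono:
  assumes "planar_cover V E k" "k \<le> l" "countable V"
  shows "planar_cover V E l"
proof -
  obtain Es where Es: "(\<Union>i<k. Es i) = E" "\<forall>i<k. Es i \<subseteq> E \<and> planar V (Es i)"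
    using assms(1) unfolding planar_cover_def by blast
  define Fs where "Fs i = (if i < k then Es i else {})" for i
  have "(\<Union>i<l. Fs i) = (\<Union>i<k. Es i)"
    using assms(2) unfolding Fs_def by (force split: if_splits)
  moreover have "\<forall>i<l. Fs i \<subseteq> E \<and> planar V (Fs i)"
    using Es(2) planar_edgeless[OF assms(3)] unfolding Fs_def by simp
  ultimately show ?thesis unfolding planar_cover_def using Es(1) by metis
qed

definition finite_simple_graph :: "'a set \<Rightarrow> 'a set set \<Rightarrow> bool" where
  "finite_simple_graph V E \<longleftrightarrow> finite V \<and> (\<forall>e\<in>E. e \<subseteq> V \<and> card e = 2)"

lemma planar_cover_card:
  assumes "finite_simple_graph V E"
  shows "planar_cover V E (card E)"
proof -
  have V: "finite V" and E: "\<And>e. e \<in> E \<Longrightarrow> e \<subseteq> V \<and> card e = 2"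
    using assms unfolding finite_simple_graph_def by blast+
  then have "finite E" using finite_edges_of_finite_vertices by blast
  then obtain h where h: "bij_betw h {..<card E} E"
    using bij_betw_from_nat_into_finite by blast
  have "planar V {h i}" if "i < card E" for i
  proof -
    have "h i \<in> E" using h that by (auto dest: bij_betwE)
    then obtain x y where "x \<noteq> y" "h i = {x, y}" "x \<in> V" "y \<in> V"
      using E by (metis card_2_iff insert_subset)
    then show ?thesis using planar_single_edge[OF countable_finite[OF V]] by simp
  qed
  moreover have "(\<Union>i<card E. {h i}) = E" using h by (auto simp: bij_betw_def)
  ultimately show ?thesis unfolding planar_cover_def by (intro exI[of _ "\<lambda>i. {h i}"]) auto
qed

lemma planar_cover_image:
  assumes "planar_cover V E k" "inj_on \<psi> V" "\<And>e. e \<in> E \<Longrightarrow> e \<subseteq> V"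
  shows "planar_cover (\<psi> ` V) ((`) \<psi> ` E) k"
proof -
  obtain Es where Es: "(\<Union>i<k. Es i) = E" "\<forall>i<k. Es i \<subseteq> E \<and> planar V (Es i)"
    using assms(1) unfolding planar_cover_def by blast
  have "(\<Union>i<k. (`) \<psi> ` Es i) = (`) \<psi> ` E" using Es(1) by blast
  moreover have "(`) \<psi> ` Es i \<subseteq> (`) \<psi> ` E \<and> planar (\<psi> ` V) ((`) \<psi> ` Es i)" if "i < k" for i
    using Es(2) that assms(2,3) planar_image_iff[of \<psi> V "Es i"] by blast
  ultimately show ?thesis unfolding planar_cover_def by (intro exI[of _ "\<lambda>i. (`) \<psi> ` Es i"]) simp
qed

lemma planar_cover_image_iff:
  assumes "inj_on \<psi> V" "\<And>e. e \<in> E \<Longrightarrow> e \<subseteq> V"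
  shows "planar_cover (\<psi> ` V) ((`) \<psi> ` E) k \<longleftrightarrow> planar_cover V E k"
proof
  note inv = inv_into_graph_image[OF assms]
  assume "planar_cover (\<psi> ` V) ((`) \<psi> ` E) k"
  from planar_cover_image[OF this inv(1,4)] show "planar_cover V E k" by (simp only: inv(2,3))
qed (use assms planar_cover_image in blast)

lemma thickness_image:
  "inj_on \<psi> V \<Longrightarrow> (\<And>e. e \<in> E \<Longrightarrow> e \<subseteq> V) \<Longrightarrow> thickness (\<psi> ` V, (`) \<psi> ` E) = thickness (V, E)"
  by (simp add: thickness_eq_Least_planar_cover planar_cover_image_iff)

lemma planar_cover_disjoint_Un_iff:
  assumes "V1 \<inter> V2 = {}" "finite V1" "finite V2"
    and E1: "\<And>e. e \<in> E1 \<Longrightarrow> e \<subseteq> V1" and E2: "\<And>e. e \<in> E2 \<Longrightarrow> e \<subseteq> V2"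
  shows "planar_cover (V1 \<union> V2) (E1 \<union> E2) k \<longleftrightarrow> planar_cover V1 E1 k \<and> planar_cover V2 E2 k"
proof
  have restrict: "planar_cover V' E' k"
    if cover: "planar_cover (V1 \<union> V2) (E1 \<union> E2) k" and sub: "V' \<subseteq> V1 \<union> V2" "E' \<subseteq> E1 \<union> E2"
       and E': "\<And>e. e \<in> E' \<Longrightarrow> e \<subseteq> V'" for V' E'
  proof -
    obtain Es where Es: "(\<Union>i<k. Es i) = E1 \<union> E2" "\<forall>i<k. planar (V1 \<union> V2) (Es i)"
      using cover unfolding planar_cover_def by blast
    have "(\<Union>i<k. Es i \<inter> E') = E'" using Es(1) sub(2) by blast
    moreover have "planar V' (Es i \<inter> E')" if "i < k" for i
    proof (rule planar_subgraph)
      show "planar (V1 \<union> V2) (Es i)" using Es(2) \<open>i < k\<close> by blast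
    qed (use sub(1) E' in auto)
    ultimately show ?thesis unfolding planar_cover_def by (intro exI[of _ "\<lambda>i. Es i \<inter> E'"]) auto
  qed
  assume "planar_cover (V1 \<union> V2) (E1 \<union> E2) k"
  then show "planar_cover V1 E1 k \<and> planar_cover V2 E2 k"
    using restrict[of V1 E1] restrict[of V2 E2] E1 E2 by blast
next
  assume "planar_cover V1 E1 k \<and> planar_cover V2 E2 k"
  then obtain Es1 Es2 where
    Es1: "(\<Union>i<k. Es1 i) = E1" "\<forall>i<k. Es1 i \<subseteq> E1 \<and> planar V1 (Es1 i)" and
    Es2: "(\<Union>i<k. Es2 i) = E2" "\<forall>i<k. Es2 i \<subseteq> E2 \<and> planar V2 (Es2 i)"
    unfolding planar_cover_def by blast
  have "(\<Union>i<k. Es1 i \<union> Es2 i) = E1 \<union> E2" using Es1(1) Es2(1) by blast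
  moreover have "planar (V1 \<union> V2) (Es1 i \<union> Es2 i)" if "i < k" for i
    using Es1(2) Es2(2) that E1 E2 by (intro planar_disjoint_Un[OF _ _ assms(1-3)]) blast+
  ultimately show "planar_cover (V1 \<union> V2) (E1 \<union> E2) k"
    unfolding planar_cover_def using Es1(2) Es2(2) by (intro exI[of _ "\<lambda>i. Es1 i \<union> Es2 i"]) blast
qed

lemma Least_conj_eq_max:
  fixes P Q :: "nat \<Rightarrow> bool"
  assumes "\<And>k l. P k \<Longrightarrow> k \<le> l \<Longrightarrow> P l" "\<And>k l. Q k \<Longrightarrow> k \<le> l \<Longrightarrow> Q l" "P a" "Q b"
  shows "(LEAST k. P k \<and> Q k) = max (LEAST k. P k) (LEAST k. Q k)"
proof (rule Least_equality)
  show "P (max (LEAST k. P k) (LEAST k. Q k)) \<and> Q (max (LEAST k. P k) (LEAST k. Q k))"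
    using assms LeastI[of P a] LeastI[of Q b] by (meson max.cobounded1 max.cobounded2)
  show "max (LEAST k. P k) (LEAST k. Q k) \<le> k" if "P k \<and> Q k" for k
    using that by (simp add: Least_le)
qed

lemma thickness_disjoint_Un:
  assumes "finite_simple_graph V1 E1" "finite_simple_graph V2 E2" "V1 \<inter> V2 = {}"
  shows "thickness (V1 \<union> V2, E1 \<union> E2) = max (thickness (V1, E1)) (thickness (V2, E2))"
proof -
  have "finite V1" "finite V2" "\<And>e. e \<in> E1 \<Longrightarrow> e \<subseteq> V1" "\<And>e. e \<in> E2 \<Longrightarrow> e \<subseteq> V2"
    using assms(1,2) unfolding finite_simple_graph_def by blast+
  note cover_iff = planar_cover_disjoint_Un_iff[OF assms(3) this]
  have "(LEAST k. planar_cover V1 E1 k \<and> planar_cover V2 E2 k) =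
        max (LEAST k. planar_cover V1 E1 k) (LEAST k. planar_cover V2 E2 k)"
  proof (rule Least_conj_eq_max)
    show "planar_cover V1 E1 (card E1)" "planar_cover V2 E2 (card E2)"
      by (rule planar_cover_card[OF assms(1)], rule planar_cover_card[OF assms(2)])
  qed (use planar_cover_mono countable_finite \<open>finite V1\<close> \<open>finite V2\<close> in blast)+
  then show ?thesis by (simp add: thickness_eq_Least_planar_cover cover_iff)
qed

section \<open>The Kronecker product of two complete bipartite graphs\<close>

lemma mem_Kbip_edges: "e \<in> snd (Kbip a b) \<longleftrightarrow> (\<exists>i<a. \<exists>j<b. e = {(False, i), (True, j)})"
  unfolding Kbip_def by auto

lemma fst_kron: "fst (kron G H) = fst G \<times> fst H"
  unfolding kron_def by simp

lemma mem_kron_edges: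
  "e \<in> snd (kron G H) \<longleftrightarrow> (\<exists>g g' h h'. e = {(g, h), (g', h')} \<and> {g, g'} \<in> snd G \<and> {h, h'} \<in> snd H)"
  unfolding kron_def by auto

lemma doubleton_pairs_cases:
  assumes "{g, g'} = {a, b}" "{h, h'} = {c, d}"
  shows "{(g, h), (g', h')} = {(a, c), (b, d)} \<or> {(g, h), (g', h')} = {(a, d), (b, c)}"
  using assms unfolding doubleton_eq_iff by (elim disjE conjE) (simp_all add: insert_commute)

lemma kron_Kbip_edges:
  "snd (kron (Kbip m n) (Kbip p q)) =
     {{((False, i), (False, k)), ((True, j), (True, l))} | i k j l. i < m \<and> k < p \<and> j < n \<and> l < q} \<union>
     {{((False, i), (True, k)), ((True, j), (False, l))} | i k j l. i < m \<and> k < q \<and> j < n \<and> l < p}"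
proof (intro subset_antisym subsetI)
  fix e assume "e \<in> snd (kron (Kbip m n) (Kbip p q))"
  then obtain g g' h h' where e: "e = {(g, h), (g', h')}"
    and "{g, g'} \<in> snd (Kbip m n)" "{h, h'} \<in> snd (Kbip p q)"
    unfolding mem_kron_edges by blast
  then obtain i j k l where "i < m" "j < n" "k < p" "l < q"
    and gg: "{g, g'} = {(False, i), (True, j)}" and hh: "{h, h'} = {(False, k), (True, l)}"
    unfolding mem_Kbip_edges by blast
  with doubleton_pairs_cases[OF gg hh] show "e \<in>
     {{((False, i), (False, k)), ((True, j), (True, l))} | i k j l. i < m \<and> k < p \<and> j < n \<and> l < q} \<union>
     {{((False, i), (True, k)), ((True, j), (False, l))} | i k j l. i < m \<and> k < q \<and> j < n \<and> l < p}"
    unfolding e by blast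
next
  fix e assume "e \<in>
     {{((False, i), (False, k)), ((True, j), (True, l))} | i k j l. i < m \<and> k < p \<and> j < n \<and> l < q} \<union>
     {{((False, i), (True, k)), ((True, j), (False, l))} | i k j l. i < m \<and> k < q \<and> j < n \<and> l < p}"
  then consider (same) i j k l where "i < m" "j < n" "k < p" "l < q"
      "e = {((False, i), (False, k)), ((True, j), (True, l))}"
    | (cross) i j k l where "i < m" "j < n" "k < q" "l < p"
      "e = {((False, i), (True, k)), ((True, j), (False, l))}"
    by blast
  then show "e \<in> snd (kron (Kbip m n) (Kbip p q))"
  proof cases
    case same
    then have "{(False, i), (True, j)} \<in> snd (Kbip m n)" "{(False, k), (True, l)} \<in> snd (Kbip p q)"
      by (auto simp: mem_Kbip_edges)
    with same(5) show ?thesis unfolding mem_kron_edges by blast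
  next
    case cross
    then have "{(False, i), (True, j)} \<in> snd (Kbip m n)" "{(True, k), (False, l)} \<in> snd (Kbip p q)"
      by (auto simp: mem_Kbip_edges insert_commute)
    with cross(5) show ?thesis unfolding mem_kron_edges by blast
  qed
qed

lemma div_mod_image_lessThan:
  fixes d :: nat
  assumes "0 < d"
  shows "(\<lambda>x. (x div d, x mod d)) ` {..<m * d} = {..<m} \<times> {..<d}"
proof
  show "(\<lambda>x. (x div d, x mod d)) ` {..<m * d} \<subseteq> {..<m} \<times> {..<d}"
    using assms by (auto simp: less_mult_imp_div_less)
  show "{..<m} \<times> {..<d} \<subseteq> (\<lambda>x. (x div d, x mod d)) ` {..<m * d}"
  proof clarify
    fix i k assume "i < m" "k < d"
    have "i * d + k < Suc i * d" using \<open>k < d\<close> by simp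
    also have "\<dots> \<le> m * d" using \<open>i < m\<close> by (intro mult_le_mono1) simp
    finally show "(i, k) \<in> (\<lambda>x. (x div d, x mod d)) ` {..<m * d}"
      using \<open>k < d\<close> by (intro image_eqI[of _ _ "i * d + k"]) simp_all
  qed
qed

text \<open>The vertex \<open>(s, x)\<close> of \<open>K\<^bsub>m d\<^sub>0, n d\<^sub>1\<^esub>\<close> is read as the pair \<open>(x div d, x mod d)\<close>
  with \<open>d = d\<^sub>0\<close> or \<open>d = d\<^sub>1\<close> according to its side \<open>s\<close>; the second coordinate is placed
  on side \<open>s\<close> of \<open>K\<^sub>p\<^sub>,\<^sub>q\<close> if \<open>c = False\<close> and on the opposite side if \<open>c = True\<close>.\<close>

fun kron_embed :: "bool \<Rightarrow> nat \<Rightarrow> nat \<Rightarrow> bool \<times> nat \<Rightarrow> (bool \<times> nat) \<times> (bool \<times> nat)" where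
  "kron_embed c d0 d1 (False, x) = ((False, x div d0), (c, x mod d0))"
| "kron_embed c d0 d1 (True, x) = ((True, x div d1), (\<not> c, x mod d1))"

lemma inj_kron_embed: "inj_on (kron_embed c d0 d1) A"
proof (rule inj_onI)
  fix u v assume eq: "kron_embed c d0 d1 u = kron_embed c d0 d1 v"
  obtain s x t y where uv: "u = (s, x)" "v = (t, y)" by fastforce
  have "x div d = y div d \<Longrightarrow> x mod d = y mod d \<Longrightarrow> x = y" for d
    by (metis div_mult_mod_eq)
  with eq show "u = v" unfolding uv by (cases s; cases t) auto
qed

lemma Kbip_vertices_eq: "fst (Kbip a b) = Pair False ` {..<a} \<union> Pair True ` {..<b}"
  unfolding Kbip_def by auto

lemma Kbip_edges_eq: "snd (Kbip a b) = (\<lambda>(i, j). {(False, i), (True, j)}) ` ({..<a} \<times> {..<b})"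
  unfolding Kbip_def by auto

lemma kron_embed_vertices:
  assumes "0 < d0" "0 < d1"
  shows "kron_embed c d0 d1 ` fst (Kbip (m * d0) (n * d1)) =
    (\<lambda>(i, k). ((False, i), (c, k))) ` ({..<m} \<times> {..<d0}) \<union>
    (\<lambda>(j, l). ((True, j), (\<not> c, l))) ` ({..<n} \<times> {..<d1})"
proof -
  have "kron_embed c d0 d1 ` Pair False ` {..<m * d0} =
      (\<lambda>(i, k). ((False, i), (c, k))) ` (\<lambda>x. (x div d0, x mod d0)) ` {..<m * d0}"
    "kron_embed c d0 d1 ` Pair True ` {..<n * d1} =
      (\<lambda>(j, l). ((True, j), (\<not> c, l))) ` (\<lambda>x. (x div d1, x mod d1)) ` {..<n * d1}"
    by (simp_all add: image_image)
  then show ?thesis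
    unfolding Kbip_vertices_eq image_Un div_mod_image_lessThan[OF assms(1)]
      div_mod_image_lessThan[OF assms(2)] by simp
qed

lemma kron_embed_edges:
  assumes "0 < d0" "0 < d1"
  shows "(`) (kron_embed c d0 d1) ` snd (Kbip (m * d0) (n * d1)) =
    {{((False, i), (c, k)), ((True, j), (\<not> c, l))} | i k j l. i < m \<and> k < d0 \<and> j < n \<and> l < d1}"
proof -
  have "({..<m} \<times> {..<d0}) \<times> ({..<n} \<times> {..<d1}) =
      map_prod (\<lambda>x. (x div d0, x mod d0)) (\<lambda>x. (x div d1, x mod d1)) ` ({..<m * d0} \<times> {..<n * d1})"
    using assms by (intro map_prod_surj_on[symmetric] div_mod_image_lessThan)
  note grid = this
  have "(`) (kron_embed c d0 d1) ` snd (Kbip (m * d0) (n * d1)) =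
    (\<lambda>((i, k), (j, l)). {((False, i), (c, k)), ((True, j), (\<not> c, l))})
      ` (({..<m} \<times> {..<d0}) \<times> ({..<n} \<times> {..<d1}))"
    unfolding Kbip_edges_eq grid image_image by (intro image_cong) auto
  also have "\<dots> =
      {{((False, i), (c, k)), ((True, j), (\<not> c, l))} | i k j l. i < m \<and> k < d0 \<and> j < n \<and> l < d1}"
    by (auto simp: image_iff) blast
  finally show ?thesis .
qed

lemma kron_Kbip_eq:
  assumes "0 < p" "0 < q"
  shows "kron (Kbip m n) (Kbip p q) =
    (kron_embed False p q ` fst (Kbip (m * p) (n * q)) \<union>
       kron_embed True q p ` fst (Kbip (m * q) (n * p)),
     (`) (kron_embed False p q) ` snd (Kbip (m * p) (n * q)) \<union>
       (`) (kron_embed True q p) ` snd (Kbip (m * q) (n * p)))"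
    (is "_ = (?V, ?E)")
proof -
  have "fst (kron (Kbip m n) (Kbip p q)) = ?V"
    unfolding fst_kron kron_embed_vertices[OF assms] kron_embed_vertices[OF assms(2,1)]
    unfolding Kbip_vertices_eq[of m n] Kbip_vertices_eq[of p q] by auto
  moreover have "snd (kron (Kbip m n) (Kbip p q)) = ?E"
    unfolding kron_embed_edges[OF assms] kron_embed_edges[OF assms(2,1)] kron_Kbip_edges by simp
  ultimately show ?thesis by (simp add: prod_eq_iff)
qed

lemma finite_simple_graph_Kbip: "finite_simple_graph (fst (Kbip a b)) (snd (Kbip a b))"
  unfolding finite_simple_graph_def Kbip_vertices_eq Kbip_edges_eq by auto

lemma finite_simple_graph_image:
  assumes "finite_simple_graph V E" "inj_on \<psi> V"
  shows "finite_simple_graph (\<psi> ` V) ((`) \<psi> ` E)"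
proof -
  have V: "finite V" and E: "\<And>e. e \<in> E \<Longrightarrow> e \<subseteq> V \<and> card e = 2"
    using assms(1) unfolding finite_simple_graph_def by blast+
  have "\<psi> ` e \<subseteq> \<psi> ` V \<and> card (\<psi> ` e) = 2" if "e \<in> E" for e
  proof -
    have "e \<subseteq> V" "card e = 2" using E[OF that] by blast+
    moreover have "card (\<psi> ` e) = card e"
      by (rule card_image, rule inj_on_subset[OF assms(2) \<open>e \<subseteq> V\<close>])
    ultimately show ?thesis by (simp add: image_mono)
  qed
  with V show ?thesis unfolding finite_simple_graph_def by simp
qed

lemma kron_embed_sides: "fst (fst (kron_embed c d0 d1 u)) \<noteq> fst (snd (kron_embed c d0 d1 u)) \<longleftrightarrow> c"
proof -
  obtain s x where "u = (s, x)" by fastforce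
  then show ?thesis by (cases s) simp_all
qed

lemma kron_embed_disjoint: "kron_embed False d0 d1 ` A \<inter> kron_embed True d0' d1' ` B = {}"
proof -
  have "fst (fst v) = fst (snd v)" if "v \<in> kron_embed False d0 d1 ` A" for v
    using that kron_embed_sides[of False d0 d1] by force
  moreover have "fst (fst v) \<noteq> fst (snd v)" if "v \<in> kron_embed True d0' d1' ` B" for v
    using that kron_embed_sides[of True d0' d1'] by force
  ultimately show ?thesis by blast
qed

theorem theorem3p6:
  fixes m n p q :: nat
  assumes "m > 0" and "n > 0" and "p > 0" and "q > 0"
  shows "thickness (kron (Kbip m n) (Kbip p q))
           = max (thickness (Kbip (m * p) (n * q))) (thickness (Kbip (m * q) (n * p)))"
proof -
  let ?\<phi> = "kron_embed False p q" and ?\<chi> = "kron_embed True q p"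
  obtain V1 E1 V2 E2
    where K1: "Kbip (m * p) (n * q) = (V1, E1)" and K2: "Kbip (m * q) (n * p) = (V2, E2)"
    by fastforce
  have simple: "finite_simple_graph V1 E1" "finite_simple_graph V2 E2"
    using finite_simple_graph_Kbip K1 K2 by (metis fst_conv snd_conv)+
  then have edges: "\<And>e. e \<in> E1 \<Longrightarrow> e \<subseteq> V1" "\<And>e. e \<in> E2 \<Longrightarrow> e \<subseteq> V2"
    unfolding finite_simple_graph_def by blast+
  have "thickness (kron (Kbip m n) (Kbip p q)) =
      thickness (?\<phi> ` V1 \<union> ?\<chi> ` V2, (`) ?\<phi> ` E1 \<union> (`) ?\<chi> ` E2)"
    using kron_Kbip_eq[OF assms(3,4), of m n] K1 K2 by simp
  also have "\<dots> = max (thickness (?\<phi> ` V1, (`) ?\<phi> ` E1)) (thickness (?\<chi> ` V2, (`) ?\<chi> ` E2))"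
    using simple
    by (intro thickness_disjoint_Un finite_simple_graph_image inj_kron_embed kron_embed_disjoint)
  also have "\<dots> = max (thickness (V1, E1)) (thickness (V2, E2))"
    using thickness_image[OF inj_kron_embed edges(1)] thickness_image[OF inj_kron_embed edges(2)]
    by simp
  finally show ?thesis unfolding K1 K2 .
qed

end
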